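(* Let $\mathbf{x}=(x_1,\ldots,x_d)^T\in\mathbb{R}^d$ be nonzero, $m<d$ a positive integer, $0<\alpha<1$, and $p_k=\alpha\frac{|x_k|}{\|\mathbf{x}\|_1}+(1-\alpha)\frac{x_k^2}{\|\mathbf{x}\|_2^2}$. Draw $t_1,\ldots,t_m\in[d]$ i.i.d. with $\mathbb{P}(t_j=k)=p_k$, and let $\mathbf{S}\in\mathbb{R}^{d\times m}$ have $j$-th column $\mathbf{e}_{t_j}/\sqrt{m p_{t_j}}$. Then $$\mathbb{E}[\mathbf{S}\mathbf{S}^T\mathbf{x}\mathbf{x}^T\mathbf{S}\mathbf{S}^T]=\sum_{k=1}^d\frac{x_k^2}{mp_k}\mathbf{e}_k\mathbf{e}_k^T+\frac{m-1}{m}\mathbf{x}\mathbf{x}^T,$$ $$\mathbb{E}[\mathbb{D}(\mathbf{S}\mathbf{S}^T\mathbf{x}\mathbf{x}^T\mathbf{S}\mathbf{S}^T)]=\sum_{k=1}^d\Big(\frac{1}{mp_k}+\frac{m-1}{m}\Big)x_k^2\mathbf{e}_k\mathbf{e}_k^T,$$ $$\mathbb{E}[(\mathbb{D}(\mathbf{S}\mathbf{S}^T\mathbf{x}\mathbf{x}^T\mathbf{S}\mathbf{S}^T))^2]=\sum_{k=1}^d\Big[\frac{1}{m^3p_k^3}+\frac{7(m-1)}{m^3p_k^2}+\frac{6(m^2-3m+2)}{m^3p_k}+\frac{m^3-6m^2+11m-6}{m^3}\Big]x_k^4\mathbf{e}_k\mathbf{e}_k^T,$$ $$\mathbb{E}[\mathbf{S}\mathbf{S}^T\mathbf{x}\mathbf{x}^T\mathbf{S}\mathbf{S}^T\,\mathbb{D}(\mathbf{S}\mathbf{S}^T\mathbf{x}\mathbf{x}^T\mathbf{S}\mathbf{S}^T)]=\big(\mathbb{E}[\mathbb{D}(\mathbf{S}\mathbf{S}^T\mathbf{x}\mathbf{x}^T\mathbf{S}\mathbf{S}^T)\,\mathbf{S}\mathbf{S}^T\mathbf{x}\mathbf{x}^T\mathbf{S}\mathbf{S}^T]\big)^T$$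 $$=\sum_{k=1}^d\Big[\frac{1}{m^3p_k^3}+\frac{6(m-1)}{m^3p_k^2}+\frac{3(m^2-3m+2)}{m^3p_k}\Big]x_k^4\mathbf{e}_k\mathbf{e}_k^T+\frac{m-1}{m^3}\mathbf{x}\mathbf{x}^T\mathbb{D}\big(\{\tfrac{x_k^2}{p_k^2}\}\big)+\frac{3(m^2-3m+2)}{m^3}\mathbf{x}\mathbf{x}^T\Big[\mathbb{D}\big(\{\tfrac{x_k^2}{p_k}\}\big)+\frac{m-3}{3}\mathbb{D}(\{x_k^2\})\Big],$$ and $$\mathbb{E}[(\mathbf{S}\mathbf{S}^T\mathbf{x}\mathbf{x}^T\mathbf{S}\mathbf{S}^T)^2]=\sum_{k=1}^d\Big[\frac{4(m-1)}{m^3p_k^2}+\frac{1}{m^3p_k^3}\Big]x_k^4\mathbf{e}_k\mathbf{e}_k^T+\sum_{k=1}^d\Big[\frac{\|\mathbf{x}\|_2^2(m^2-3m+2)}{m^3}+\frac{m-1}{m^3}\sum_{l=1}^d\frac{x_l^2}{p_l}\Big]\frac{x_k^2}{p_k}\mathbf{e}_k\mathbf{e}_k^T$$ $$+\Big[\frac{\|\mathbf{x}\|_2^2(m^3-6m^2+11m-6)}{m^3}+\frac{m^2-3m+2}{m^3}\sum_{l=1}^d\frac{x_l^2}{p_l}\Big]\mathbf{x}\mathbf{x}^T+\mathbf{x}\mathbf{x}^T\Big[\frac{2(m^2-3m+2)}{m^3}\mathbb{D}\big(\{\tfrac{x_k^2}{p_k}\}\big)+\frac{m-1}{m^3}\mathbb{D}\big(\{\tfrac{x_k^2}{p_k^2}\}\big)\Big]$$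 $$+\Big[\frac{2(m^2-3m+2)}{m^3}\mathbb{D}\big(\{\tfrac{x_k^2}{p_k}\}\big)+\frac{m-1}{m^3}\mathbb{D}\big(\{\tfrac{x_k^2}{p_k^2}\}\big)\Big]\mathbf{x}\mathbf{x}^T.$$
   Context: $\mathbf{e}_1,\ldots,\mathbf{e}_d$ denote the standard basis vectors of $\mathbb{R}^d$, $[d]=\{1,\ldots,d\}$. For a square matrix $\mathbf{A}$, $\mathbb{D}(\mathbf{A})$ is the diagonal matrix having the same main diagonal as $\mathbf{A}$. For scalars $c_1,\ldots,c_d$, $\mathbb{D}(\{c_k\})$ denotes the $d\times d$ diagonal matrix with $c_1,\ldots,c_d$ on its diagonal (e.g. $\mathbb{D}(\{x_k^2/p_k\})$). Indices $k$ with $x_k=0$ have $p_k=0$; for such $k$ every term containing a factor $x_k^a/p_k^b$ ($a\ge 2$) is interpreted as $0$. *)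

theory Defs
  imports "HOL-Probability.Probability"
begin

text \<open>l1 norm of a vector; the l2 norm is the library's norm on real^'d.\<close>
definition l1norm :: "real^'d \<Rightarrow> real" where
  "l1norm x = (\<Sum>k\<in>UNIV. \<bar>x $ k\<bar>)"

definition sprob :: "real \<Rightarrow> real^'d \<Rightarrow> 'd \<Rightarrow> real" where
  "sprob \<alpha> x k = \<alpha> * \<bar>x $ k\<bar> / l1norm x + (1 - \<alpha>) * (x $ k)^2 / (norm x)^2"

definition sample_pmf :: "real \<Rightarrow> real^'d \<Rightarrow> 'd pmf" where
  "sample_pmf \<alpha> x = embed_pmf (\<lambda>k. sprob \<alpha> x k)"

text \<open>m i.i.d. draws t_1..t_m, indexed by the finite type 'm with CARD('m) = m.\<close>
definition draws_pmf :: "real \<Rightarrow> real^'d \<Rightarrow> ('m::finite \<Rightarrow> 'd) pmf" where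
  "draws_pmf \<alpha> x = Pi_pmf UNIV undefined (\<lambda>_. sample_pmf \<alpha> x)"

definition sketch :: "real \<Rightarrow> real^'d \<Rightarrow> ('m::finite \<Rightarrow> 'd) \<Rightarrow> real^'m^'d" where
  "sketch \<alpha> x t = (\<chi> i j. if t j = i then 1 / sqrt (real CARD('m) * sprob \<alpha> x (t j)) else 0)"

definition outer :: "real^'n \<Rightarrow> real^'n \<Rightarrow> real^'n^'n" where
  "outer u v = (\<chi> i j. u $ i * v $ j)"

definition diagpart :: "real^'n^'n \<Rightarrow> real^'n^'n" where
  "diagpart A = (\<chi> i j. if i = j then A $ i $ j else 0)"

definition diagm :: "('n \<Rightarrow> real) \<Rightarrow> real^'n^'n" where
  "diagm c = (\<chi> i j. if i = j then c i else 0)"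

definition Mrand :: "real \<Rightarrow> real^'d \<Rightarrow> ('m::finite \<Rightarrow> 'd) \<Rightarrow> real^'d^'d" where
  "Mrand \<alpha> x t = (let S = sketch \<alpha> x t in
      S ** transpose S ** outer x x ** S ** transpose S)"

end

theory Submission
  imports Defs
begin

(*
  S S^T is diagonal with k-th entry N_k / (m p_k), where N_k counts the draws equal to k.
  Hence S S^T x x^T S S^T = y y^T for y = S S^T x, and y_k = \<Sum>_j w_k(t_j) is a sum of m
  i.i.d. terms w_k(s) = [s = k] x_k / (m p_k).  Every entry of the six random matrices is a
  monomial of degree 2 or 4 in the y_k (summed over an index for (S S^T x x^T S S^T)^2), so its
  expectation is a mixed moment of sums of i.i.d. terms.  Such a moment expands over the set
  partitions of the factors, a partition into b blocks carrying the falling factorial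
  m (m - 1) ... (m - b + 1).  Since w_i(s) w_j(s) = 0 unless i = j, the only single-draw moments
  that survive are E[w_k^n] = x_k^n / (m^n p_k^(n-1)), and collecting terms gives the formulas.
*)

notation measure_pmf.expectation ("\<E>")

lemma expectation_pmf_finite:
  fixes M :: "'a::finite pmf" and f :: "'a \<Rightarrow> real"
  shows "\<E> M f = (\<Sum>a\<in>UNIV. f a * pmf M a)"
  by (rule integral_measure_pmf_real) auto

lemma expectation_add_finite:
  fixes M :: "'a::finite pmf" and f g :: "'a \<Rightarrow> real"
  shows "\<E> M (\<lambda>a. f a + g a) = \<E> M f + \<E> M g"
  by (simp add: expectation_pmf_finite sum.distrib algebra_simps)

lemma expectation_sum_finite:
  fixes M :: "'a::finite pmf" and f :: "'b \<Rightarrow> 'a \<Rightarrow> real"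
  shows "\<E> M (\<lambda>a. \<Sum>l\<in>L. f l a) = (\<Sum>l\<in>L. \<E> M (f l))"
  unfolding expectation_pmf_finite by (simp add: sum_distrib_right) (rule sum.swap)

lemma expectation_const_pmf: "\<E> M (\<lambda>_. c::real) = c"
  by (simp add: measure_pmf.prob_space)

lemma expectation_pair_pmf:
  fixes P :: "'a::finite pmf" and Q :: "'b::finite pmf" and g :: "'a \<times> 'b \<Rightarrow> real"
  shows "\<E> (pair_pmf P Q) g = \<E> P (\<lambda>a. \<E> Q (\<lambda>b. g (a, b)))"
proof -
  have "\<E> (pair_pmf P Q) g = (\<Sum>z\<in>UNIV \<times> UNIV. g z * pmf (pair_pmf P Q) z)"
    by (simp add: expectation_pmf_finite)
  also have "\<dots> = (\<Sum>a\<in>UNIV. \<Sum>b\<in>UNIV. g (a, b) * pmf Q b * pmf P a)"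
    by (subst sum.cartesian_product) (auto intro!: sum.cong simp: pmf_pair mult_ac)
  finally show ?thesis
    by (simp add: expectation_pmf_finite sum_distrib_right)
qed

lemma expectation_Pi_pmf_insert:
  fixes q :: "'b::finite pmf" and A :: "'a::finite set" and g :: "('a \<Rightarrow> 'b) \<Rightarrow> real"
  assumes "a \<notin> A"
  shows "\<E> (Pi_pmf (insert a A) dflt (\<lambda>_. q)) g =
    \<E> q (\<lambda>y. \<E> (Pi_pmf A dflt (\<lambda>_. q)) (\<lambda>t. g (t(a := y))))"
  using assms by (simp add: Pi_pmf_insert expectation_pair_pmf case_prod_beta)

lemma expectation_vec_component:
  fixes M :: "'a::finite pmf" and F :: "'a \<Rightarrow> real^'n^'k"
  shows "\<E> M F $ i $ j = \<E> M (\<lambda>t. F t $ i $ j)"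
  by (subst integral_measure_pmf[where A=UNIV]) (auto simp: expectation_pmf_finite mult.commute)

section \<open>Mixed moments of sums of i.i.d. terms\<close>

definition draw_sum :: "'a set \<Rightarrow> ('b \<Rightarrow> real) \<Rightarrow> ('a \<Rightarrow> 'b) \<Rightarrow> real" where
  "draw_sum A f t = (\<Sum>a\<in>A. f (t a))"

lemma draw_sum_empty [simp]: "draw_sum {} f t = 0"
  by (simp add: draw_sum_def)

lemma draw_sum_insert_upd:
  "finite A \<Longrightarrow> a \<notin> A \<Longrightarrow> draw_sum (insert a A) f (t(a := y)) = f y + draw_sum A f t"
  unfolding draw_sum_def by (auto intro!: sum.cong)

lemma mult_expand2: "(a + u) * (b + v) = a * b + a * v + b * u + u * (v::real)"
  by algebra

lemma mult_expand3: "(a + u) * (b + v) * (c + w) =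
    a * b * c + (a * b) * w + (a * c) * v + (b * c) * u + a * (v * w) + b * (u * w) + c * (u * v)
    + u * v * (w::real)"
  by algebra

lemma mult_expand4: "(a + u) * (b + v) * (c + w) * (d + z) =
    a * b * c * d + (a * b * c) * z + (a * b * d) * w + (a * c * d) * v + (b * c * d) * u
    + (a * b) * (w * z) + (a * c) * (v * z) + (a * d) * (v * w) + (b * c) * (u * z)
    + (b * d) * (u * w) + (c * d) * (u * v)
    + a * (v * w * z) + b * (u * w * z) + c * (u * v * z) + d * (u * v * w) + u * v * w * (z::real)"
  by algebra

context
  fixes q :: "'b::finite pmf" and dflt :: 'b
begin

abbreviation iid :: "'a set \<Rightarrow> ('a \<Rightarrow> 'b) pmf" where
  "iid A \<equiv> Pi_pmf A dflt (\<lambda>_. q)"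

lemma expectation_draw_sum:
  fixes A :: "'a::finite set"
  shows "\<E> (iid A) (draw_sum A f) = real (card A) * \<E> q f"
  using finite[of A]
proof (induction A rule: finite_induct)
  case (insert a A)
  then have "\<E> (iid (insert a A)) (draw_sum (insert a A) f) = \<E> q (\<lambda>y. \<E> (iid A) (\<lambda>t. f y + draw_sum A f t))"
    by (simp add: expectation_Pi_pmf_insert draw_sum_insert_upd)
  also have "\<dots> = real (card (insert a A)) * \<E> q f"
    using insert by (simp add: expectation_add_finite expectation_const_pmf algebra_simps)
  finally show ?case .
qed (simp add: expectation_const_pmf)

lemma expectation_draw_sum_mult2:
  fixes A :: "'a::finite set"
  shows "\<E> (iid A) (\<lambda>t. draw_sum A f t * draw_sum A g t) =
      real (card A) * \<E> q (\<lambda>y. f y * g y)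
    + real (card A) * (real (card A) - 1) * (\<E> q f * \<E> q g)"
  using finite[of A]
proof (induction A rule: finite_induct)
  case (insert a A)
  then have "\<E> (iid (insert a A)) (\<lambda>t. draw_sum (insert a A) f t * draw_sum (insert a A) g t)
      = \<E> q (\<lambda>y. \<E> (iid A) (\<lambda>t. (f y + draw_sum A f t) * (g y + draw_sum A g t)))"
    by (simp add: expectation_Pi_pmf_insert draw_sum_insert_upd)
  also have "\<dots> = real (card (insert a A)) * \<E> q (\<lambda>y. f y * g y)
      + real (card (insert a A)) * (real (card (insert a A)) - 1) * (\<E> q f * \<E> q g)"
    using insert
    by (simp only: mult_expand2 expectation_draw_sum expectation_add_finite expectation_const_pmf
        integral_mult_right_zero integral_mult_left_zero) (simp add: algebra_simps)
  finally show ?case .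
qed (simp add: expectation_const_pmf)

lemma expectation_draw_sum_mult3:
  fixes A :: "'a::finite set"
  shows "\<E> (iid A) (\<lambda>t. draw_sum A f t * draw_sum A g t * draw_sum A h t) =
      real (card A) * \<E> q (\<lambda>y. f y * g y * h y)
    + real (card A) * (real (card A) - 1) * (\<E> q (\<lambda>y. f y * g y) * \<E> q h
        + \<E> q (\<lambda>y. f y * h y) * \<E> q g + \<E> q (\<lambda>y. g y * h y) * \<E> q f)
    + real (card A) * (real (card A) - 1) * (real (card A) - 2) * (\<E> q f * \<E> q g * \<E> q h)"
  (is "_ = ?R A")
  using finite[of A]
proof (induction A rule: finite_induct)
  case (insert a A)
  then have "\<E> (iid (insert a A))
        (\<lambda>t. draw_sum (insert a A) f t * draw_sum (insert a A) g t * draw_sum (insert a A) h t)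
      = \<E> q (\<lambda>y. \<E> (iid A) (\<lambda>t. (f y + draw_sum A f t) * (g y + draw_sum A g t)
          * (h y + draw_sum A h t)))"
    by (simp add: expectation_Pi_pmf_insert draw_sum_insert_upd)
  also have "\<dots> = ?R (insert a A)"
    using insert
    by (simp only: mult_expand3 expectation_draw_sum expectation_draw_sum_mult2 expectation_add_finite
        expectation_const_pmf integral_mult_right_zero integral_mult_left_zero)
      (simp add: algebra_simps)
  finally show ?case .
qed (simp add: expectation_const_pmf)

lemma expectation_draw_sum_mult4:
  fixes A :: "'a::finite set"
  shows "\<E> (iid A) (\<lambda>t. draw_sum A f t * draw_sum A g t * draw_sum A h t * draw_sum A k t) =
      real (card A) * \<E> q (\<lambda>y. f y * g y * h y * k y)
    + real (card A) * (real (card A) - 1) * (\<E> q (\<lambda>y. f y * g y * h y) * \<E> q k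
        + \<E> q (\<lambda>y. f y * g y * k y) * \<E> q h + \<E> q (\<lambda>y. f y * h y * k y) * \<E> q g
        + \<E> q (\<lambda>y. g y * h y * k y) * \<E> q f
        + \<E> q (\<lambda>y. f y * g y) * \<E> q (\<lambda>y. h y * k y)
        + \<E> q (\<lambda>y. f y * h y) * \<E> q (\<lambda>y. g y * k y)
        + \<E> q (\<lambda>y. f y * k y) * \<E> q (\<lambda>y. g y * h y))
    + real (card A) * (real (card A) - 1) * (real (card A) - 2) *
        (\<E> q (\<lambda>y. f y * g y) * \<E> q h * \<E> q k + \<E> q (\<lambda>y. f y * h y) * \<E> q g * \<E> q k
        + \<E> q (\<lambda>y. f y * k y) * \<E> q g * \<E> q h + \<E> q (\<lambda>y. g y * h y) * \<E> q f * \<E> q k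
        + \<E> q (\<lambda>y. g y * k y) * \<E> q f * \<E> q h + \<E> q (\<lambda>y. h y * k y) * \<E> q f * \<E> q g)
    + real (card A) * (real (card A) - 1) * (real (card A) - 2) * (real (card A) - 3)
        * (\<E> q f * \<E> q g * \<E> q h * \<E> q k)"
  (is "_ = ?R A")
  using finite[of A]
proof (induction A rule: finite_induct)
  case (insert a A)
  then have "\<E> (iid (insert a A)) (\<lambda>t. draw_sum (insert a A) f t * draw_sum (insert a A) g t
        * draw_sum (insert a A) h t * draw_sum (insert a A) k t)
      = \<E> q (\<lambda>y. \<E> (iid A) (\<lambda>t. (f y + draw_sum A f t) * (g y + draw_sum A g t)
          * (h y + draw_sum A h t) * (k y + draw_sum A k t)))"
    by (simp add: expectation_Pi_pmf_insert draw_sum_insert_upd)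
  also have "\<dots> = ?R (insert a A)"
    using insert
    by (simp only: mult_expand4 expectation_draw_sum expectation_draw_sum_mult2
        expectation_draw_sum_mult3 expectation_add_finite expectation_const_pmf
        integral_mult_right_zero integral_mult_left_zero)
      (simp add: algebra_simps)
  finally show ?case .
qed (simp add: expectation_const_pmf)

end

lemma l1norm_pos: "x \<noteq> 0 \<Longrightarrow> 0 < l1norm x"
proof -
  assume "x \<noteq> 0"
  then obtain k where "x $ k \<noteq> 0"
    by (metis vec_eq_iff zero_index)
  moreover have "\<bar>x $ k\<bar> \<le> l1norm x"
    unfolding l1norm_def by (rule member_le_sum) auto
  ultimately show ?thesis
    by linarith
qed

lemma sprob_nonneg: "0 \<le> \<alpha> \<Longrightarrow> \<alpha> \<le> 1 \<Longrightarrow> 0 \<le> sprob \<alpha> x k"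
  unfolding sprob_def l1norm_def
  by (intro add_nonneg_nonneg divide_nonneg_nonneg mult_nonneg_nonneg) (auto intro: sum_nonneg)

lemma sprob_eq_0_iff:
  assumes "x \<noteq> 0" "0 < \<alpha>" "\<alpha> < 1"
  shows "sprob \<alpha> x k = 0 \<longleftrightarrow> x $ k = 0"
proof
  assume "sprob \<alpha> x k = 0"
  moreover have "0 \<le> (1 - \<alpha>) * (x $ k)^2 / (norm x)^2"
    using assms by simp
  moreover have "0 < l1norm x"
    using assms(1) by (rule l1norm_pos)
  ultimately show "x $ k = 0"
    using assms unfolding sprob_def
    by (smt (verit, best) divide_pos_pos mult_pos_pos zero_less_abs_iff)
qed (simp add: sprob_def)

lemma sum_sprob:
  assumes "x \<noteq> 0"
  shows "(\<Sum>k\<in>UNIV. sprob \<alpha> x k) = 1"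
proof -
  have norm_sq: "(norm x)^2 = (\<Sum>k\<in>UNIV. (x $ k)^2)"
    by (simp only: power2_norm_eq_inner) (simp add: inner_vec_def power2_eq_square)
  have "(\<Sum>k\<in>UNIV. sprob \<alpha> x k) = \<alpha> * (\<Sum>k\<in>UNIV. \<bar>x $ k\<bar>) / l1norm x
      + (1 - \<alpha>) * (\<Sum>k\<in>UNIV. (x $ k)^2) / (norm x)^2"
    unfolding sprob_def by (simp add: sum.distrib sum_divide_distrib sum_distrib_left)
  also have "\<dots> = 1"
    using l1norm_pos[OF assms] assms by (simp add: l1norm_def flip: norm_sq)
  finally show ?thesis .
qed

lemma pmf_sample_pmf:
  assumes "x \<noteq> 0" "0 \<le> \<alpha>" "\<alpha> \<le> 1"
  shows "pmf (sample_pmf \<alpha> x) k = sprob \<alpha> x k"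
  unfolding sample_pmf_def
proof (rule pmf_embed_pmf)
  show nonneg: "0 \<le> sprob \<alpha> x k" for k
    using assms by (simp add: sprob_nonneg)
  show "(\<integral>\<^sup>+ k. ennreal (sprob \<alpha> x k) \<partial>count_space UNIV) = 1"
    using sum_sprob[OF assms(1)] by (simp add: nn_integral_count_space_finite sum_ennreal nonneg)
qed

lemma outer_component [simp]: "outer u v $ i $ j = u $ i * v $ j"
  by (simp add: outer_def)

lemma matrix_mult_outer_mult:
  "A ** outer u v ** B = outer (A *v u) (transpose B *v v)"
  by (simp add: vec_eq_iff matrix_matrix_mult_def matrix_vector_mult_def transpose_def
      sum_product sum_distrib_left sum_distrib_right mult_ac)

definition draw_weight :: "real \<Rightarrow> real^'d \<Rightarrow> real \<Rightarrow> 'd \<Rightarrow> 'd \<Rightarrow> real" where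
  "draw_weight \<alpha> x m i s = (if s = i then x $ i / (m * sprob \<alpha> x i) else 0)"

definition sketch_proj :: "real \<Rightarrow> real^'d \<Rightarrow> ('m::finite \<Rightarrow> 'd) \<Rightarrow> real^'d" where
  "sketch_proj \<alpha> x t = (sketch \<alpha> x t ** transpose (sketch \<alpha> x t)) *v x"

lemma Mrand_eq_outer: "Mrand \<alpha> x t = outer (sketch_proj \<alpha> x t) (sketch_proj \<alpha> x t)"
proof -
  let ?P = "sketch \<alpha> x t ** transpose (sketch \<alpha> x t)"
  have "Mrand \<alpha> x t = ?P ** outer x x ** ?P"
    unfolding Mrand_def Let_def by (simp only: matrix_mul_assoc)
  then show ?thesis
    by (simp add: matrix_mult_outer_mult matrix_transpose_mul sketch_proj_def)
qed

lemma sketch_proj_component: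
  fixes t :: "'m::finite \<Rightarrow> 'd::finite"
  assumes "0 \<le> \<alpha>" "\<alpha> \<le> 1"
  shows "sketch_proj \<alpha> x t $ i = draw_sum UNIV (draw_weight \<alpha> x (real CARD('m)) i) t"
proof -
  define c where "c = draw_sum UNIV (\<lambda>s. if s = i then 1 / (real CARD('m) * sprob \<alpha> x i) else 0) t"
  have "0 \<le> real CARD('m) * sprob \<alpha> x k" for k
    using sprob_nonneg[OF assms, of x k] by simp
  then have gram: "(sketch \<alpha> x t ** transpose (sketch \<alpha> x t)) $ i $ k = (if k = i then c else 0)" for k
    by (auto simp: matrix_matrix_mult_def transpose_def sketch_def draw_sum_def c_def
        intro!: sum.cong sum.neutral)
  have "sketch_proj \<alpha> x t $ i = (\<Sum>k\<in>UNIV. (if k = i then c else 0) * x $ k)"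
    by (simp add: sketch_proj_def matrix_vector_mult_def gram)
  also have "\<dots> = c * x $ i"
    by (simp add: if_distrib[of "\<lambda>z. z * _"] cong: if_cong)
  also have "\<dots> = draw_sum UNIV (draw_weight \<alpha> x (real CARD('m)) i) t"
    unfolding c_def draw_sum_def draw_weight_def sum_distrib_right by (rule sum.cong) auto
  finally show ?thesis .
qed

lemma matrix_eqI: "(\<And>i j. A $ i $ j = B $ i $ j) \<Longrightarrow> A = B"
  by (simp add: vec_eq_iff)

lemma diagpart_component [simp]: "diagpart A $ i $ j = (if i = j then A $ i $ j else 0)"
  by (simp add: diagpart_def)

lemma diagm_component [simp]: "diagm c $ i $ j = (if i = j then c i else 0)"
  by (simp add: diagm_def)

lemma sum_outer_axis_component:
  fixes c :: "'n::finite \<Rightarrow> real"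
  shows "(\<Sum>k\<in>UNIV. c k *\<^sub>R outer (axis k 1) (axis k 1)) $ i $ j = (if i = j then c i else 0)"
proof -
  have "(\<Sum>k\<in>UNIV. c k *\<^sub>R outer (axis k (1::real)) (axis k 1)) $ i $ j
      = (\<Sum>k\<in>UNIV. if k = i then (if i = j then c i else 0) else 0)"
    unfolding sum_component vector_scaleR_component by (rule sum.cong) (auto simp: axis_def)
  then show ?thesis
    by simp
qed

lemma matrix_mult_diagm_component: "(A ** diagm c) $ i $ j = A $ i $ j * c j"
  by (simp add: matrix_matrix_mult_def if_distrib[of "\<lambda>z. _ * z"] cong: if_cong)

lemma diagm_mult_matrix_component: "(diagm c ** A) $ i $ j = c i * A $ i $ j"
  by (simp add: matrix_matrix_mult_def if_distrib[of "\<lambda>z. z * _"] cong: if_cong)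

lemma diagpart_eq_diagm: "diagpart A = diagm (\<lambda>k. A $ k $ k)"
  by (simp add: vec_eq_iff)

lemma diagm_add: "diagm c + diagm c' = diagm (\<lambda>k. c k + c' k)"
  by (simp add: vec_eq_iff)

lemma scaleR_diagm: "s *\<^sub>R diagm c = diagm (\<lambda>k. s * c k)"
  by (simp add: vec_eq_iff)

lemma diagpart_outer_sq_component:
  "(diagpart (outer u u) ** diagpart (outer u u)) $ i $ j = (if i = j then u $ i * u $ i * (u $ i * u $ i) else 0)"
  by (simp add: diagpart_eq_diagm matrix_mult_diagm_component)

lemma outer_mult_diagpart_outer_component:
  "(outer u u ** diagpart (outer u u)) $ i $ j = u $ i * u $ j * (u $ j * u $ j)"
  by (simp add: diagpart_eq_diagm matrix_mult_diagm_component)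

lemma diagpart_outer_mult_outer_component:
  "(diagpart (outer u u) ** outer u u) $ i $ j = u $ j * u $ i * (u $ i * u $ i)"
  by (simp add: diagpart_eq_diagm diagm_mult_matrix_component mult_ac)

lemma outer_sq_component:
  "(outer u u ** outer u u) $ i $ j = (\<Sum>l\<in>UNIV. u $ i * u $ j * (u $ l * u $ l))"
  by (simp add: matrix_matrix_mult_def mult_ac)

section \<open>Moments of the sketched vector\<close>

locale sketch_sampling =
  fixes x :: "real^'d::finite" and \<alpha> :: real
  assumes x_nonzero: "x \<noteq> 0" and alpha_pos: "0 < \<alpha>" and alpha_less_one: "\<alpha> < 1"
begin

abbreviation p :: "'d \<Rightarrow> real" where
  "p \<equiv> sprob \<alpha> x"

lemma x_eq_0_if_p_eq_0: "p k = 0 \<Longrightarrow> x $ k = 0"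
  using sprob_eq_0_iff[OF x_nonzero alpha_pos alpha_less_one] by blast

text \<open>Each term x_k^a / p_k^b (a >= b) of the paper equals x_k^(a-b) * ratio k ^ b, also where
  p_k = 0: then x_k = 0, and division by zero yields 0.  Written with ratio, the moments of the
  sketched vector are polynomials in x, ratio and 1/m.\<close>

definition ratio :: "'d \<Rightarrow> real" where
  "ratio k = x $ k / p k"

lemma expectation_sample_pmf_indicator:
  "\<E> (sample_pmf \<alpha> x) (\<lambda>s. if s = i then c else 0) = c * p i"
  using x_nonzero alpha_pos alpha_less_one
  by (simp add: expectation_pmf_finite pmf_sample_pmf if_distrib[of "\<lambda>z. z * _"] cong: if_cong)

context
  fixes m :: real
begin

abbreviation w :: "'d \<Rightarrow> 'd \<Rightarrow> real" where
  "w \<equiv> draw_weight \<alpha> x m"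

lemma weight_power_mult_p:
  assumes "0 < n"
  shows "(x $ i / (m * p i))^n * p i = x $ i * ratio i ^ (n - 1) / m^n"
proof (cases "p i = 0")
  case True
  then show ?thesis
    using x_eq_0_if_p_eq_0[OF True] assms by simp
next
  case False
  obtain k where "n = Suc k"
    using assms gr0_implies_Suc by blast
  with False show ?thesis
    by (simp add: ratio_def power_divide power_mult_distrib)
qed

lemma expectation_draw_weight:
  "\<E> (sample_pmf \<alpha> x) (w i) = x $ i / m"
proof -
  have "\<E> (sample_pmf \<alpha> x) (w i) = (x $ i / (m * p i))^1 * p i"
    unfolding draw_weight_def by (simp add: expectation_sample_pmf_indicator)
  then show ?thesis
    using weight_power_mult_p[of 1 i] by simp
qed

lemma expectation_draw_weight_mult2:
  "\<E> (sample_pmf \<alpha> x) (\<lambda>s. w i s * w j s) =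
    (if i = j then x $ i * ratio i / m^2 else 0)"
proof -
  have "(\<lambda>s. w i s * w j s) = (\<lambda>s. if i = j then (if s = i then (x $ i / (m * p i))^2 else 0) else 0)"
    by (auto simp: draw_weight_def power2_eq_square)
  then show ?thesis
    using weight_power_mult_p[of 2 i] by (cases "i = j") (simp_all add: expectation_sample_pmf_indicator)
qed

lemma expectation_draw_weight_mult3:
  "\<E> (sample_pmf \<alpha> x) (\<lambda>s. w i s * w j s * w k s) =
    (if i = j \<and> j = k then x $ i * (ratio i)^2 / m^3 else 0)"
proof -
  have "(\<lambda>s. w i s * w j s * w k s) =
      (\<lambda>s. if i = j \<and> j = k then (if s = i then (x $ i / (m * p i))^3 else 0) else 0)"
    by (auto simp: draw_weight_def power3_eq_cube)
  then show ?thesis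
    using weight_power_mult_p[of 3 i]
    by (cases "i = j \<and> j = k") (auto simp: expectation_sample_pmf_indicator)
qed

lemma expectation_draw_weight_mult4:
  "\<E> (sample_pmf \<alpha> x) (\<lambda>s. w i s * w j s * w k s * w l s) =
    (if i = j \<and> j = k \<and> k = l then x $ i * (ratio i)^3 / m^4 else 0)"
proof -
  have "(\<lambda>s. w i s * w j s * w k s * w l s) =
      (\<lambda>s. if i = j \<and> j = k \<and> k = l then (if s = i then (x $ i / (m * p i))^4 else 0) else 0)"
    by (auto simp: draw_weight_def power4_eq_xxxx)
  then show ?thesis
    using weight_power_mult_p[of 4 i]
    by (cases "i = j \<and> j = k \<and> k = l") (auto simp: expectation_sample_pmf_indicator)
qed

end

lemma sketch_proj_eq_draw_sum:
  "sketch_proj \<alpha> x (t :: 'm::finite \<Rightarrow> 'd) $ i = draw_sum UNIV (draw_weight \<alpha> x (real CARD('m)) i) t"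
  using alpha_pos alpha_less_one by (simp add: sketch_proj_component)

lemma expectation_sketch_proj_mult2:
  defines "m \<equiv> real CARD('m::finite)"
  shows "\<E> (draws_pmf \<alpha> x)
      (\<lambda>t :: 'm \<Rightarrow> 'd. sketch_proj \<alpha> x t $ i * sketch_proj \<alpha> x t $ j) =
    (if i = j then x $ i * ratio i / m else 0) + (m - 1) / m * x $ i * x $ j"
proof -
  have "\<E> (draws_pmf \<alpha> x)
      (\<lambda>t :: 'm \<Rightarrow> 'd. sketch_proj \<alpha> x t $ i * sketch_proj \<alpha> x t $ j) =
    m * (if i = j then x $ i * ratio i / m^2 else 0) + m * (m - 1) * (x $ i / m * (x $ j / m))"
    unfolding sketch_proj_eq_draw_sum draws_pmf_def m_def
    by (simp only: expectation_draw_sum_mult2 expectation_draw_weight expectation_draw_weight_mult2)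
  also have "\<dots> = (if i = j then x $ i * ratio i / m else 0) + (m - 1) / m * x $ i * x $ j"
    by (simp add: m_def field_simps power2_eq_square)
  finally show ?thesis .
qed

text \<open>Grouped by the dependence on l, so that summing over l (for the square of Mrand)
  only needs the sums of x_l^2 and of x_l * ratio l.\<close>

lemma expectation_sketch_proj_mult4:
  defines "m \<equiv> real CARD('m::finite)"
  shows "\<E> (draws_pmf \<alpha> x) (\<lambda>t :: 'm \<Rightarrow> 'd.
      sketch_proj \<alpha> x t $ i * sketch_proj \<alpha> x t $ j * (sketch_proj \<alpha> x t $ l * sketch_proj \<alpha> x t $ l)) =
      (((m - 1) * (m - 2) * (m - 3) * x $ i * x $ j
          + (m - 1) * (m - 2) * (if i = j then x $ i * ratio i else 0)) * (x $ l)^2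
     + ((m - 1) * (m - 2) * x $ i * x $ j + (m - 1) * (if i = j then x $ i * ratio i else 0))
          * (x $ l * ratio l)
     + (if l = i then (m - 1) * (ratio i + 2 * (m - 2) * x $ i) * ratio i * x $ i * x $ j else 0)
     + (if l = j then (m - 1) * (ratio j + 2 * (m - 2) * x $ j) * ratio j * x $ j * x $ i else 0)
     + (if l = i \<and> i = j then (ratio i + 4 * (m - 1) * x $ i) * (ratio i)^2 * x $ i else 0)) / m^3"
  (is "_ = ?R")
proof -
  have "m \<noteq> 0"
    by (simp add: m_def)
  let ?a = "\<lambda>k. x $ k / m"
  let ?b = "\<lambda>k1 k2. if k1 = k2 then x $ k1 * ratio k1 / m^2 else 0"
  let ?c = "\<lambda>k1 k2 k3. if k1 = k2 \<and> k2 = k3 then x $ k1 * (ratio k1)^2 / m^3 else 0"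
  let ?d = "\<lambda>k1 k2 k3 k4. if k1 = k2 \<and> k2 = k3 \<and> k3 = k4 then x $ k1 * (ratio k1)^3 / m^4 else 0"
  have "\<E> (draws_pmf \<alpha> x) (\<lambda>t :: 'm \<Rightarrow> 'd.
      sketch_proj \<alpha> x t $ i * sketch_proj \<alpha> x t $ j * (sketch_proj \<alpha> x t $ l * sketch_proj \<alpha> x t $ l)) =
      m * ?d i j l l
    + m * (m - 1) * (?c i j l * ?a l + ?c i j l * ?a l + ?c i l l * ?a j + ?c j l l * ?a i
        + ?b i j * ?b l l + ?b i l * ?b j l + ?b i l * ?b j l)
    + m * (m - 1) * (m - 2) * (?b i j * ?a l * ?a l + ?b i l * ?a j * ?a l + ?b i l * ?a j * ?a l
        + ?b j l * ?a i * ?a l + ?b j l * ?a i * ?a l + ?b l l * ?a i * ?a j)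
    + m * (m - 1) * (m - 2) * (m - 3) * (?a i * ?a j * ?a l * ?a l)"
    unfolding sketch_proj_eq_draw_sum draws_pmf_def m_def mult.assoc[symmetric, of _ _ "draw_sum _ _ _"]
    by (simp only: expectation_draw_sum_mult4 expectation_draw_weight expectation_draw_weight_mult2
        expectation_draw_weight_mult3 expectation_draw_weight_mult4)
  also have "\<dots> = ?R"
    using \<open>m \<noteq> 0\<close> by (cases "l = i"; cases "l = j"; cases "i = j")
      (simp_all add: field_simps power2_eq_square power3_eq_cube power4_eq_xxxx)
  finally show ?thesis .
qed

lemma x_eq_0_or_p_neq_0: "x $ k = 0 \<or> p k \<noteq> 0"
  using x_eq_0_if_p_eq_0 by blast

lemma expectation_Mrand:
  defines "m \<equiv> real CARD('m::finite)"
  shows "\<E> (draws_pmf \<alpha> x) (Mrand \<alpha> x :: ('m \<Rightarrow> 'd) \<Rightarrow> real^'d^'d) =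
    (\<Sum>k\<in>UNIV. ((x $ k)^2 / (m * p k)) *\<^sub>R outer (axis k 1) (axis k 1)) + ((m - 1) / m) *\<^sub>R outer x x"
  (is "?L = ?R")
proof (rule matrix_eqI)
  show "?L $ i $ j = ?R $ i $ j" for i j
    by (simp add: expectation_vec_component Mrand_eq_outer expectation_sketch_proj_mult2 m_def
        sum_outer_axis_component ratio_def power2_eq_square mult_ac del: sum_component)
qed

lemma expectation_diagpart_Mrand:
  defines "m \<equiv> real CARD('m::finite)"
  shows "\<E> (draws_pmf \<alpha> x) (\<lambda>t :: 'm \<Rightarrow> 'd. diagpart (Mrand \<alpha> x t)) =
    (\<Sum>k\<in>UNIV. ((1 / (m * p k) + (m - 1) / m) * (x $ k)^2) *\<^sub>R outer (axis k 1) (axis k 1))"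
  (is "?L = ?R")
proof (rule matrix_eqI)
  show "?L $ i $ j = ?R $ i $ j" for i j
    using x_eq_0_or_p_neq_0[of i]
    by (cases "i = j")
      (auto simp: expectation_vec_component Mrand_eq_outer expectation_sketch_proj_mult2 m_def
        sum_outer_axis_component ratio_def field_simps power2_eq_square simp del: sum_component)
qed

lemma expectation_diagpart_Mrand_sq:
  defines "m \<equiv> real CARD('m::finite)"
  shows "\<E> (draws_pmf \<alpha> x)
      (\<lambda>t :: 'm \<Rightarrow> 'd. diagpart (Mrand \<alpha> x t) ** diagpart (Mrand \<alpha> x t)) =
    (\<Sum>k\<in>UNIV. ((1 / (m^3 * (p k)^3) + 7 * (m - 1) / (m^3 * (p k)^2)
        + 6 * (m^2 - 3*m + 2) / (m^3 * p k) + (m^3 - 6*m^2 + 11*m - 6) / m^3)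
        * (x $ k)^4) *\<^sub>R outer (axis k 1) (axis k 1))"
  (is "?L = ?R")
proof (rule matrix_eqI)
  show "?L $ i $ j = ?R $ i $ j" for i j
    using x_eq_0_or_p_neq_0[of i]
    by (cases "i = j"; simp only: expectation_vec_component Mrand_eq_outer diagpart_outer_sq_component
        expectation_sketch_proj_mult4 sum_outer_axis_component if_True if_False simp_thms
        expectation_const_pmf)
      (auto simp: m_def ratio_def field_simps power2_eq_square power3_eq_cube power4_eq_xxxx)
qed

lemma expectation_Mrand_mult_diagpart_transpose:
  "\<E> (draws_pmf \<alpha> x) (\<lambda>t :: 'm::finite \<Rightarrow> 'd. Mrand \<alpha> x t ** diagpart (Mrand \<alpha> x t)) =
    transpose (\<E> (draws_pmf \<alpha> x) (\<lambda>t :: 'm \<Rightarrow> 'd. diagpart (Mrand \<alpha> x t) ** Mrand \<alpha> x t))"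
  by (rule matrix_eqI)
    (simp add: expectation_vec_component transpose_def Mrand_eq_outer
      outer_mult_diagpart_outer_component diagpart_outer_mult_outer_component)

lemma expectation_Mrand_mult_diagpart:
  defines "m \<equiv> real CARD('m::finite)"
  shows "\<E> (draws_pmf \<alpha> x)
      (\<lambda>t :: 'm \<Rightarrow> 'd. Mrand \<alpha> x t ** diagpart (Mrand \<alpha> x t)) =
    (\<Sum>k\<in>UNIV. ((1 / (m^3 * (p k)^3) + 6 * (m - 1) / (m^3 * (p k)^2)
        + 3 * (m^2 - 3*m + 2) / (m^3 * p k)) * (x $ k)^4) *\<^sub>R outer (axis k 1) (axis k 1))
    + ((m - 1) / m^3) *\<^sub>R (outer x x ** diagm (\<lambda>k. (x $ k)^2 / (p k)^2))
    + (3 * (m^2 - 3*m + 2) / m^3) *\<^sub>R (outer x x **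
        (diagm (\<lambda>k. (x $ k)^2 / p k) + ((m - 3) / 3) *\<^sub>R diagm (\<lambda>k. (x $ k)^2)))"
  (is "?L = ?R")
proof (rule matrix_eqI)
  show "?L $ i $ j = ?R $ i $ j" for i j
    using x_eq_0_or_p_neq_0[of j]
    by (cases "i = j"; simp only: expectation_vec_component Mrand_eq_outer outer_mult_diagpart_outer_component
        expectation_sketch_proj_mult4 vector_add_component vector_scaleR_component
        sum_outer_axis_component scaleR_diagm diagm_add matrix_mult_diagm_component outer_component)
      (auto simp: m_def ratio_def field_simps power2_eq_square power3_eq_cube power4_eq_xxxx)
qed

lemma expectation_Mrand_sq:
  defines "m \<equiv> real CARD('m::finite)"
  shows "\<E> (draws_pmf \<alpha> x)
      (\<lambda>t :: 'm \<Rightarrow> 'd. Mrand \<alpha> x t ** Mrand \<alpha> x t) =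
    (\<Sum>k\<in>UNIV. ((4 * (m - 1) / (m^3 * (p k)^2) + 1 / (m^3 * (p k)^3)) * (x $ k)^4)
        *\<^sub>R outer (axis k 1) (axis k 1))
    + (\<Sum>k\<in>UNIV. (((norm x)^2 * (m^2 - 3*m + 2) / m^3
        + (m - 1) / m^3 * (\<Sum>l\<in>UNIV. (x $ l)^2 / p l)) * ((x $ k)^2 / p k)) *\<^sub>R outer (axis k 1) (axis k 1))
    + ((norm x)^2 * (m^3 - 6*m^2 + 11*m - 6) / m^3 + (m^2 - 3*m + 2) / m^3 * (\<Sum>l\<in>UNIV. (x $ l)^2 / p l))
        *\<^sub>R outer x x
    + outer x x ** ((2 * (m^2 - 3*m + 2) / m^3) *\<^sub>R diagm (\<lambda>k. (x $ k)^2 / p k)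
        + ((m - 1) / m^3) *\<^sub>R diagm (\<lambda>k. (x $ k)^2 / (p k)^2))
    + ((2 * (m^2 - 3*m + 2) / m^3) *\<^sub>R diagm (\<lambda>k. (x $ k)^2 / p k)
        + ((m - 1) / m^3) *\<^sub>R diagm (\<lambda>k. (x $ k)^2 / (p k)^2)) ** outer x x"
  (is "?L = ?R")
proof (rule matrix_eqI)
  have norm_sq: "(norm x)^2 = (\<Sum>l\<in>UNIV. (x $ l)^2)"
    by (simp only: power2_norm_eq_inner) (simp add: inner_vec_def power2_eq_square)
  have ratio_sum: "(\<Sum>l\<in>UNIV. (x $ l)^2 / p l) = (\<Sum>l\<in>UNIV. x $ l * ratio l)"
    by (simp add: ratio_def power2_eq_square)
  fix i j
  have "?L $ i $ j = (\<Sum>l\<in>UNIV. \<E> (draws_pmf \<alpha> x) (\<lambda>t :: 'm \<Rightarrow> 'd.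
      sketch_proj \<alpha> x t $ i * sketch_proj \<alpha> x t $ j * (sketch_proj \<alpha> x t $ l * sketch_proj \<alpha> x t $ l)))"
    by (simp only: expectation_vec_component Mrand_eq_outer outer_sq_component expectation_sum_finite)
  also have "\<dots> = (((m - 1) * (m - 2) * (m - 3) * x $ i * x $ j
          + (m - 1) * (m - 2) * (if i = j then x $ i * ratio i else 0)) * (norm x)^2
     + ((m - 1) * (m - 2) * x $ i * x $ j + (m - 1) * (if i = j then x $ i * ratio i else 0))
          * (\<Sum>l\<in>UNIV. (x $ l)^2 / p l)
     + (m - 1) * (ratio i + 2 * (m - 2) * x $ i) * ratio i * x $ i * x $ j
     + (m - 1) * (ratio j + 2 * (m - 2) * x $ j) * ratio j * x $ j * x $ i
     + (if i = j then (ratio i + 4 * (m - 1) * x $ i) * (ratio i)^2 * x $ i else 0)) / m^3"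
    unfolding expectation_sketch_proj_mult4 m_def norm_sq ratio_sum
    by (simp add: sum.distrib flip: sum_divide_distrib sum_distrib_left)
  also have "\<dots> = ?R $ i $ j"
    using x_eq_0_or_p_neq_0[of i] x_eq_0_or_p_neq_0[of j]
    by (cases "i = j"; simp only: vector_add_component vector_scaleR_component sum_outer_axis_component
        scaleR_diagm diagm_add matrix_mult_diagm_component diagm_mult_matrix_component outer_component)
      (auto simp: m_def ratio_def field_simps power2_eq_square power3_eq_cube power4_eq_xxxx)
  finally show "?L $ i $ j = ?R $ i $ j" .
qed

end

theorem lemma1:
  fixes x :: "real^'d" and \<alpha> :: real
  assumes "x \<noteq> 0"
    and "CARD('m::finite) < CARD('d)"
    and "0 < \<alpha>" and "\<alpha> < 1"
  defines "m \<equiv> real CARD('m)"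
    and "p \<equiv> sprob \<alpha> x"
    and "E \<equiv> \<lambda>f. measure_pmf.expectation (draws_pmf \<alpha> x :: ('m \<Rightarrow> 'd) pmf) f"
    and "M \<equiv> (Mrand \<alpha> x :: ('m \<Rightarrow> 'd) \<Rightarrow> real^'d^'d)"
    and "e \<equiv> \<lambda>k::'d. axis k (1::real)"
    and "ql \<equiv> (\<Sum>l\<in>UNIV. (x $ l)^2 / sprob \<alpha> x l)"
  shows
   "E (\<lambda>t. M t) =
      (\<Sum>k\<in>UNIV. ((x $ k)^2 / (m * p k)) *\<^sub>R outer (e k) (e k))
      + ((m - 1) / m) *\<^sub>R outer x x
  \<and> E (\<lambda>t. diagpart (M t)) =
      (\<Sum>k\<in>UNIV. ((1 / (m * p k) + (m - 1) / m) * (x $ k)^2) *\<^sub>R outer (e k) (e k))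
  \<and> E (\<lambda>t. diagpart (M t) ** diagpart (M t)) =
      (\<Sum>k\<in>UNIV. ((1 / (m^3 * (p k)^3) + 7 * (m - 1) / (m^3 * (p k)^2)
          + 6 * (m^2 - 3*m + 2) / (m^3 * p k) + (m^3 - 6*m^2 + 11*m - 6) / m^3)
          * (x $ k)^4) *\<^sub>R outer (e k) (e k))
  \<and> E (\<lambda>t. M t ** diagpart (M t)) = transpose (E (\<lambda>t. diagpart (M t) ** M t))
  \<and> E (\<lambda>t. M t ** diagpart (M t)) =
      (\<Sum>k\<in>UNIV. ((1 / (m^3 * (p k)^3) + 6 * (m - 1) / (m^3 * (p k)^2)
          + 3 * (m^2 - 3*m + 2) / (m^3 * p k)) * (x $ k)^4) *\<^sub>R outer (e k) (e k))
      + ((m - 1) / m^3) *\<^sub>R (outer x x ** diagm (\<lambda>k. (x $ k)^2 / (p k)^2))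
      + (3 * (m^2 - 3*m + 2) / m^3) *\<^sub>R (outer x x **
          (diagm (\<lambda>k. (x $ k)^2 / p k) + ((m - 3) / 3) *\<^sub>R diagm (\<lambda>k. (x $ k)^2)))
  \<and> E (\<lambda>t. M t ** M t) =
      (\<Sum>k\<in>UNIV. ((4 * (m - 1) / (m^3 * (p k)^2) + 1 / (m^3 * (p k)^3)) * (x $ k)^4)
          *\<^sub>R outer (e k) (e k))
      + (\<Sum>k\<in>UNIV. (((norm x)^2 * (m^2 - 3*m + 2) / m^3 + (m - 1) / m^3 * ql)
          * ((x $ k)^2 / p k)) *\<^sub>R outer (e k) (e k))
      + ((norm x)^2 * (m^3 - 6*m^2 + 11*m - 6) / m^3 + (m^2 - 3*m + 2) / m^3 * ql)
          *\<^sub>R outer x x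
      + outer x x ** ((2 * (m^2 - 3*m + 2) / m^3) *\<^sub>R diagm (\<lambda>k. (x $ k)^2 / p k)
          + ((m - 1) / m^3) *\<^sub>R diagm (\<lambda>k. (x $ k)^2 / (p k)^2))
      + ((2 * (m^2 - 3*m + 2) / m^3) *\<^sub>R diagm (\<lambda>k. (x $ k)^2 / p k)
          + ((m - 1) / m^3) *\<^sub>R diagm (\<lambda>k. (x $ k)^2 / (p k)^2)) ** outer x x"
proof -
  interpret sketch_sampling x \<alpha>
    using assms by unfold_locales
  show ?thesis
    unfolding E_def M_def m_def p_def e_def ql_def
    using expectation_Mrand expectation_diagpart_Mrand expectation_diagpart_Mrand_sq
      expectation_Mrand_mult_diagpart_transpose expectation_Mrand_mult_diagpart expectation_Mrand_sq
    by simp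
qed

end
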